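(* Let $\mathbb{H}$ be the real quaternion algebra with standard basis $\{1,i,j,k\}$, and let $p\in\mathbb{R}[x]$ be any nonconstant real polynomial. Then $$\{p(ab)-p(ba)\mid a,b\in\mathbb{H}\}=\{bi+cj+dk\mid b,c,d\in\mathbb{R}\}.$$
   Context: $\mathbb{H}$ has multiplication determined by $i^2=j^2=k^2=ijk=-1$. *)

theory Defs
  imports "HOL-Computational_Algebra.Polynomial"
begin

text \<open>The real quaternions, with components Re, Im1 (i), Im2 (j), Im3 (k),
  and multiplication determined by i^2 = j^2 = k^2 = ijk = -1.\<close>

codatatype quat = Quat (Re: real) (Im1: real) (Im2: real) (Im3: real)

instantiation quat :: ring_1
begin
definition "0 = Quat 0 0 0 0"
definition "1 = Quat 1 0 0 0"
definition "x + y = Quat (Re x + Re y) (Im1 x + Im1 y) (Im2 x + Im2 y) (Im3 x + Im3 y)"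
definition "x - y = Quat (Re x - Re y) (Im1 x - Im1 y) (Im2 x - Im2 y) (Im3 x - Im3 y)"
definition "- x = Quat (- Re x) (- Im1 x) (- Im2 x) (- Im3 x)"
definition "x * y = Quat
   (Re x * Re y - Im1 x * Im1 y - Im2 x * Im2 y - Im3 x * Im3 y)
   (Re x * Im1 y + Im1 x * Re y + Im2 x * Im3 y - Im3 x * Im2 y)
   (Re x * Im2 y - Im1 x * Im3 y + Im2 x * Re y + Im3 x * Im1 y)
   (Re x * Im3 y + Im1 x * Im2 y - Im2 x * Im1 y + Im3 x * Re y)"
instance
  by standard (auto simp: zero_quat_def one_quat_def plus_quat_def minus_quat_def
      uminus_quat_def times_quat_def quat.expand algebra_simps)
end

instantiation quat :: real_vector
begin
definition "scaleR r x = Quat (r * Re x) (r * Im1 x) (r * Im2 x) (r * Im3 x)"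
instance
  by standard (auto simp: scaleR_quat_def plus_quat_def quat.expand algebra_simps)
end

instance quat :: real_algebra_1
  by standard (auto simp: scaleR_quat_def times_quat_def one_quat_def quat.expand algebra_simps)

definition quat_i :: quat where "quat_i = Quat 0 1 0 0"
definition quat_j :: quat where "quat_j = Quat 0 0 1 0"
definition quat_k :: quat where "quat_k = Quat 0 0 0 1"

text \<open>Evaluation of a real polynomial at a quaternion (real coefficients are central).\<close>
definition qpoly :: "real poly \<Rightarrow> quat \<Rightarrow> quat" where
  "qpoly p x = (\<Sum>n\<le>degree p. coeff p n *\<^sub>R x ^ n)"

end

theory Submission
  imports Defs "HOL-Computational_Algebra.Fundamental_Theorem_Algebra"
begin

text \<open>Since \<open>Re (x * y) = Re (y * x)\<close>, also \<open>Re ((a * b) ^ n) = Re ((b * a) ^ n)\<close>, so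
  \<open>p(ab) - p(ba)\<close> is always a pure quaternion. Conversely, write a pure quaternion as
  \<open>r e\<close> with \<open>e\<^sup>2 = -1\<close>, so that \<open>x + y i \<mapsto> x + y e\<close> embeds \<open>\<complex>\<close> into \<open>\<bbbH>\<close>
  and commutes with real polynomials. As \<open>p\<close> is nonconstant, \<open>p(z) = r i / 2\<close> for some
  \<open>z \<in> \<complex>\<close>, and then \<open>p(cnj z) = - r i / 2\<close>. Finally a nonzero pure quaternion \<open>a\<close>
  anticommuting with \<open>e\<close> conjugates the image of \<open>z\<close> to that of \<open>cnj z\<close>, so
  \<open>b = a\<^sup>-\<^sup>1 z\<close> gives \<open>ab = z\<close> and \<open>ba = cnj z\<close>, whence \<open>p(ab) - p(ba) = r e\<close>.\<close>

lemma linear_quat_Re: "linear quat.Re"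
  by (rule linearI) (simp_all add: plus_quat_def scaleR_quat_def)

lemma Re_qpoly: "quat.Re (qpoly p x) = (\<Sum>n\<le>degree p. coeff p n * quat.Re (x ^ n))"
  unfolding qpoly_def linear_sum[OF linear_quat_Re] linear_scale[OF linear_quat_Re] by simp

lemma Re_mult_commute: "quat.Re (x * y) = quat.Re (y * x)"
  by (simp add: times_quat_def)

lemma power_mult_swap: "(a * b) ^ Suc n = a * (b * a) ^ n * b"
  for a b :: "'a::monoid_mult"
  by (induction n) (simp_all add: mult.assoc)

lemma Re_power_mult_commute: "quat.Re ((a * b) ^ n) = quat.Re ((b * a) ^ n)"
proof (cases n)
  case (Suc m)
  have "quat.Re ((a * b) ^ n) = quat.Re (a * ((b * a) ^ m * b))"
    by (simp only: Suc power_mult_swap mult.assoc)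
  also have "\<dots> = quat.Re ((b * a) ^ m * b * a)"
    by (simp only: Re_mult_commute[of a] mult.assoc)
  also have "\<dots> = quat.Re ((b * a) ^ n)"
    by (simp only: Suc power_Suc2 mult.assoc)
  finally show ?thesis .
qed simp

lemma Re_qpoly_commutator: "quat.Re (qpoly p (a * b) - qpoly p (b * a)) = 0"
  by (simp add: minus_quat_def Re_qpoly Re_power_mult_commute)

lemma pure_quat_iff: "(\<exists>b c d. x = b *\<^sub>R quat_i + c *\<^sub>R quat_j + d *\<^sub>R quat_k) \<longleftrightarrow> quat.Re x = 0"
  by (auto simp: quat.expand scaleR_quat_def plus_quat_def quat_i_def quat_j_def quat_k_def)
    (metis quat.collapse)

definition embed_complex :: "'a::real_algebra_1 \<Rightarrow> complex \<Rightarrow> 'a" where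
  "embed_complex e z = of_real (Complex.Re z) + Complex.Im z *\<^sub>R e"

lemma embed_complex_zero [simp]: "embed_complex e 0 = 0"
  by (simp add: embed_complex_def)

lemma embed_complex_one [simp]: "embed_complex e 1 = 1"
  by (simp add: embed_complex_def)

lemma embed_complex_add: "embed_complex e (z + w) = embed_complex e z + embed_complex e w"
  by (simp add: embed_complex_def scaleR_add_left)

lemma embed_complex_mult:
  assumes "e * e = -1"
  shows "embed_complex e (z * w) = embed_complex e z * embed_complex e w"
  using assms
  by (simp add: embed_complex_def algebra_simps scaleR_add_left of_real_def)

lemma embed_complex_power:
  assumes "e * e = -1"
  shows "embed_complex e (z ^ n) = embed_complex e z ^ n"
  by (induction n) (simp_all add: embed_complex_mult[OF assms])

lemma embed_complex_sum: "embed_complex e (sum f A) = (\<Sum>x\<in>A. embed_complex e (f x))"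
  by (induction A rule: infinite_finite_induct) (simp_all add: embed_complex_add)

lemma embed_complex_of_real_mult: "embed_complex e (of_real c * z) = c *\<^sub>R embed_complex e z"
  by (simp add: embed_complex_def algebra_simps of_real_def)

lemma embed_complex_imaginary: "embed_complex e (Complex 0 y) = y *\<^sub>R e"
  by (simp add: embed_complex_def)

lemma swapped_products_embed_complex:
  fixes a e :: "'a::real_algebra_1"
  assumes a_square: "a * a = - of_real s" and "s \<noteq> 0" and anticomm: "a * e = - (e * a)"
  shows "\<exists>b. a * b = embed_complex e z \<and> b * a = embed_complex e (cnj z)"
proof -
  define b where "b = (- 1 / s) *\<^sub>R (a * embed_complex e z)"
  have "a * b = (- 1 / s) *\<^sub>R ((a * a) * embed_complex e z)"
    by (simp add: b_def mult.assoc)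
  then have "a * b = embed_complex e z"
    using \<open>s \<noteq> 0\<close> by (simp add: a_square of_real_def)
  moreover have "a * e * a = - (e * (a * a))"
    by (simp add: anticomm mult.assoc)
  then have "a * embed_complex e z * a = (- s) *\<^sub>R embed_complex e (cnj z)"
    by (simp add: embed_complex_def algebra_simps a_square of_real_def)
  then have "b * a = embed_complex e (cnj z)"
    using \<open>s \<noteq> 0\<close> by (simp add: b_def)
  ultimately show ?thesis by blast
qed

lemma qpoly_embed_complex:
  assumes "e * e = -1"
  shows "qpoly p (embed_complex e z) = embed_complex e (poly (map_poly of_real p) z)"
  unfolding qpoly_def poly_altdef
  by (simp add: embed_complex_sum embed_complex_of_real_mult embed_complex_power[OF assms]
      degree_map_poly coeff_map_poly)

lemma nonconstant_poly_attains:
  fixes P :: "complex poly"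
  assumes "degree P \<ge> 1"
  shows "\<exists>z. poly P z = c"
proof -
  have "degree (P + [:- c:]) = degree P"
    using assms by (simp add: degree_add_eq_left)
  then have "\<not> constant (poly (P + [:- c:]))"
    using assms by (simp add: constant_degree)
  then show ?thesis
    using fundamental_theorem_of_algebra by fastforce
qed

lemma pure_quat_square:
  assumes "quat.Re x = 0"
  shows "x * x = - of_real (Im1 x ^ 2 + Im2 x ^ 2 + Im3 x ^ 2)"
  using assms
  by (simp add: times_quat_def uminus_quat_def of_real_def scaleR_quat_def one_quat_def
      quat.expand power2_eq_square)

lemma pure_quat_polar:
  assumes "quat.Re x = 0"
  shows "\<exists>r e. quat.Re e = 0 \<and> e * e = -1 \<and> x = r *\<^sub>R e"
proof -
  define r where "r = sqrt (Im1 x ^ 2 + Im2 x ^ 2 + Im3 x ^ 2)"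
  have x_square: "x * x = - of_real (r\<^sup>2)"
    using pure_quat_square[OF assms] by (simp add: r_def)
  show ?thesis
  proof (cases "r = 0")
    case True
    then have "x = 0"
      using assms by (simp add: r_def add_nonneg_eq_0_iff quat.expand zero_quat_def)
    then show ?thesis
      by (intro exI[of _ 0] exI[of _ quat_i])
        (simp add: quat_i_def times_quat_def uminus_quat_def one_quat_def)
  next
    case False
    have "((1 / r) *\<^sub>R x) * ((1 / r) *\<^sub>R x) = -1"
      using False by (simp add: x_square of_real_def power2_eq_square)
    moreover have "quat.Re ((1 / r) *\<^sub>R x) = 0"
      using assms by (simp add: scaleR_quat_def)
    ultimately show ?thesis
      using False by (intro exI[of _ r] exI[of _ "(1 / r) *\<^sub>R x"]) simp
  qed
qed

lemma pure_quat_anticommuting: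
  assumes "quat.Re e = 0"
  shows "\<exists>a s. a * a = - of_real s \<and> s \<noteq> 0 \<and> a * e = - (e * a)"
proof (cases "Im1 e = 0 \<and> Im2 e = 0")
  case True
  then show ?thesis
    using assms
    by (intro exI[of _ quat_i] exI[of _ 1])
      (simp add: quat_i_def times_quat_def uminus_quat_def one_quat_def quat.expand)
next
  case False
  \<comment> \<open>pure quaternions anticommute iff their vector parts are orthogonal\<close>
  then show ?thesis
    using assms
    by (intro exI[of _ "Quat 0 (- Im2 e) (Im1 e) 0"] exI[of _ "Im1 e ^ 2 + Im2 e ^ 2"])
      (auto simp: times_quat_def uminus_quat_def of_real_def scaleR_quat_def one_quat_def
        quat.expand power2_eq_square sum_power2_eq_zero_iff)
qed

lemma pure_quat_is_qpoly_commutator: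
  assumes "degree p \<ge> 1" and "quat.Re x = 0"
  shows "\<exists>a b. qpoly p (a * b) - qpoly p (b * a) = x"
proof -
  obtain r e where "quat.Re e = 0" and e_square: "e * e = -1" and x: "x = r *\<^sub>R e"
    using pure_quat_polar[OF assms(2)] by blast
  define P where "P = map_poly complex_of_real p"
  obtain z where z: "poly P z = Complex 0 (r / 2)"
    using nonconstant_poly_attains assms(1) by (fastforce simp: P_def degree_map_poly)
  have "poly P (cnj z) = Complex 0 (- r / 2)"
    using poly_cnj_real[of P z] z by (simp add: P_def coeff_map_poly complex_eq_iff)
  then have "qpoly p (embed_complex e z) - qpoly p (embed_complex e (cnj z))
      = (r / 2) *\<^sub>R e - (- r / 2) *\<^sub>R e"
    using z by (simp add: qpoly_embed_complex[OF e_square] P_def embed_complex_imaginary)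
  also have "\<dots> = (r / 2 - (- r / 2)) *\<^sub>R e"
    by (rule scaleR_diff_left[symmetric])
  also have "\<dots> = x"
    by (simp add: x)
  finally have difference: "qpoly p (embed_complex e z) - qpoly p (embed_complex e (cnj z)) = x" .
  obtain a s where "a * a = - of_real s" "s \<noteq> 0" "a * e = - (e * a)"
    using pure_quat_anticommuting \<open>quat.Re e = 0\<close> by blast
  then obtain b where "a * b = embed_complex e z" "b * a = embed_complex e (cnj z)"
    using swapped_products_embed_complex by blast
  with difference show ?thesis by metis
qed

theorem theorem2p11:
  fixes p :: "real poly"
  assumes "degree p \<ge> 1"
  shows "{qpoly p (a * b) - qpoly p (b * a) | a b. True}
       = {b *\<^sub>R quat_i + c *\<^sub>R quat_j + d *\<^sub>R quat_k | b c d. True}"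
proof -
  have "{qpoly p (a * b) - qpoly p (b * a) | a b. True} = {x. quat.Re x = 0}"
    using Re_qpoly_commutator pure_quat_is_qpoly_commutator[OF assms] by blast
  also have "\<dots> = {b *\<^sub>R quat_i + c *\<^sub>R quat_j + d *\<^sub>R quat_k | b c d. True}"
    using pure_quat_iff by blast
  finally show ?thesis .
qed

end
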